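(* Let $A$ be a real $m\times n$ matrix of rank $\rho$ with columns $a_1,\ldots,a_n$, and let $A=USV^*$ be its thin singular value decomposition, where $U$ ($m\times\rho$) and $V$ ($n\times\rho$) have orthonormal columns and $S=\mathrm{diag}(s_1,\ldots,s_\rho)$ with $s_1\ge\cdots\ge s_\rho\ge 0$; set $s_{\rho+1}:=0$. For $k\in[\rho]$ let $U_{[k]}$ denote the $m\times k$ matrix of the first $k$ columns of $U$ and define $F_k:\mathbb R^m\to\mathbb R^k$ by $F_k(v)=(U_{[k]})^*v$. Then $$\sup_{i,j\in[n]}\Big|\,\|a_i-a_j\|-\|F_k(a_i)-F_k(a_j)\|\,\Big|\le 2s_{k+1},$$ i.e. $F_k$ is a $2s_{k+1}$-distortion of the set of columns of $A$.
   Context: Norms on vectors are Euclidean; $[k]=\{1,\ldots,k\}$; $^*$ denotes transpose. A map $F$ on a set $\mathcal A$ is a $\mu$-distortion of $\mathcal A$ if $\sup_{x,y\in\mathcal A}|\,\|x-y\|-\|F(x)-F(y)\|\,|\le\mu$. *)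

theory Defs
  imports "Jordan_Normal_Form.DL_Rank"
begin

definition enorm :: "real vec \<Rightarrow> real" where
  "enorm v = sqrt (v \<bullet> v)"

definition is_distortion :: "(real vec \<Rightarrow> real vec) \<Rightarrow> real vec set \<Rightarrow> real \<Rightarrow> bool" where
  "is_distortion F X mu \<longleftrightarrow>
     (\<forall>x\<in>X. \<forall>y\<in>X. \<bar>enorm (x - y) - enorm (F x - F y)\<bar> \<le> mu)"

definition first_cols :: "real mat \<Rightarrow> nat \<Rightarrow> real mat" where
  "first_cols U k = mat (dim_row U) k (\<lambda>(i,j). U $$ (i,j))"

end

theory Submission
  imports Defs "HOL-Analysis.L2_Norm"
begin

text \<open>
  Every column of \<open>A\<close> has the form \<open>a\<^sub>i = U y\<^sub>i\<close> with \<open>y\<^sub>i = S V\<^sup>* e\<^sub>i\<close>. Since \<open>U\<close> has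
  orthonormal columns, \<open>\<parallel>a\<^sub>i - a\<^sub>j\<parallel> = \<parallel>y\<^sub>i - y\<^sub>j\<parallel>\<close>, while \<open>F\<^sub>k a\<^sub>i - F\<^sub>k a\<^sub>j\<close> is the truncation of
  \<open>y\<^sub>i - y\<^sub>j\<close> to its first \<open>k\<close> coordinates. The two norms therefore differ by at most
  the norm of the tail of \<open>y\<^sub>i - y\<^sub>j\<close>, and the tail of each \<open>y\<^sub>i\<close> has norm at most \<open>s\<^sub>k\<^sub>+\<^sub>1\<close>
  because the singular values beyond \<open>k\<close> are bounded by \<open>s\<^sub>k\<^sub>+\<^sub>1\<close> and the rows of \<open>V\<close>
  have norm at most one.
\<close>

lemma enorm_eq_L2_set: "enorm v = L2_set (\<lambda>i. v $ i) {0..<dim_vec v}"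
  unfolding enorm_def L2_set_def scalar_prod_def by (simp add: power2_eq_square)

lemma enorm_nonneg: "0 \<le> enorm v"
  by (simp add: enorm_eq_L2_set)

lemma power2_enorm: "(enorm v)\<^sup>2 = v \<bullet> v"
  unfolding enorm_eq_L2_set L2_set_def
  by (simp add: sum_nonneg scalar_prod_def power2_eq_square)

lemma L2_set_diff_le: "L2_set (\<lambda>i. f i - g i) A \<le> L2_set f A + L2_set g A"
proof -
  have "L2_set (\<lambda>i. f i - g i) A = L2_set (\<lambda>i. f i + - g i) A"
    by simp
  also have "\<dots> \<le> L2_set f A + L2_set (\<lambda>i. - g i) A"
    by (rule L2_set_triangle_ineq)
  also have "L2_set (\<lambda>i. - g i) A = L2_set g A"
    by (simp add: L2_set_def)
  finally show ?thesis .
qed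

lemma abs_L2_set_Un_diff_le:
  assumes "finite A" "finite B" "A \<inter> B = {}"
  shows "\<bar>L2_set f (A \<union> B) - L2_set f A\<bar> \<le> L2_set f B"
proof -
  define a b where "a = (\<Sum>i\<in>A. (f i)\<^sup>2)" and "b = (\<Sum>i\<in>B. (f i)\<^sup>2)"
  have "0 \<le> a" "0 \<le> b"
    unfolding a_def b_def by (auto intro: sum_nonneg)
  moreover have "L2_set f (A \<union> B) = sqrt (a + b)"
    using assms unfolding L2_set_def a_def b_def by (simp add: sum.union_disjoint)
  ultimately show ?thesis
    using sqrt_add_le_add_sqrt[of a b] unfolding L2_set_def a_def[symmetric] b_def[symmetric]
    by simp
qed

lemma orthonormal_cols_left_inverse:
  fixes U :: "'a::comm_semiring_1 mat"
  assumes U: "U \<in> carrier_mat m r" and orth: "transpose_mat U * U = 1\<^sub>m r"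
    and z: "z \<in> carrier_vec r"
  shows "transpose_mat U *\<^sub>v (U *\<^sub>v z) = z"
proof -
  have "transpose_mat U *\<^sub>v (U *\<^sub>v z) = (transpose_mat U * U) *\<^sub>v z"
    using U z by (subst assoc_mult_mat_vec[of _ r m _ r]) auto
  with orth z show ?thesis
    by simp
qed

lemma orthonormal_cols_enorm:
  fixes U :: "real mat"
  assumes U: "U \<in> carrier_mat m r" and orth: "transpose_mat U * U = 1\<^sub>m r"
    and z: "z \<in> carrier_vec r"
  shows "enorm (U *\<^sub>v z) = enorm z"
proof -
  have "(U *\<^sub>v z) \<bullet> (U *\<^sub>v z) = (transpose_mat U *\<^sub>v (U *\<^sub>v z)) \<bullet> z"
    using transpose_vec_mult_scalar[OF U z, of "U *\<^sub>v z"] U z by simp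
  then show ?thesis
    unfolding enorm_def orthonormal_cols_left_inverse[OF U orth z] by simp
qed

lemma orthonormal_cols_row_enorm_le:
  fixes V :: "real mat"
  assumes V: "V \<in> carrier_mat n r" and orth: "transpose_mat V * V = 1\<^sub>m r" and i: "i < n"
  shows "enorm (row V i) \<le> 1"
proof -
  let ?x = "row V i"
  have x: "?x \<in> carrier_vec r"
    using V by auto
  have "(enorm ?x)\<^sup>2 = (V *\<^sub>v ?x) $ i"
    using V i by (simp add: power2_enorm)
  also have "\<dots> \<le> enorm (V *\<^sub>v ?x)"
    using V i member_le_L2_set[of "{0..<n}" i "\<lambda>t. (V *\<^sub>v ?x) $ t"]
    by (simp add: enorm_eq_L2_set)
  also have "\<dots> = enorm ?x"
    by (rule orthonormal_cols_enorm[OF V orth x])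
  finally have "enorm ?x * enorm ?x \<le> enorm ?x"
    by (simp add: power2_eq_square)
  then show ?thesis
    using enorm_nonneg[of ?x] mult_strict_left_mono[of 1 "enorm ?x" "enorm ?x"] by linarith
qed

lemma first_cols_transpose_mult_orthonormal:
  fixes U :: "real mat"
  assumes U: "U \<in> carrier_mat m r" and orth: "transpose_mat U * U = 1\<^sub>m r"
    and z: "z \<in> carrier_vec r" and kr: "k \<le> r"
  shows "transpose_mat (first_cols U k) *\<^sub>v (U *\<^sub>v z) = vec k (\<lambda>l. z $ l)"
proof (rule eq_vecI)
  fix l assume "l < dim_vec (vec k (\<lambda>l. z $ l))"
  then have l: "l < k" by simp
  have "col (first_cols U k) l = col U l"
    using U l kr unfolding first_cols_def by (intro eq_vecI) auto
  then have "(transpose_mat (first_cols U k) *\<^sub>v (U *\<^sub>v z)) $ l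
      = (transpose_mat U *\<^sub>v (U *\<^sub>v z)) $ l"
    using U l kr by (simp add: first_cols_def)
  also have "\<dots> = z $ l"
    unfolding orthonormal_cols_left_inverse[OF U orth z] ..
  finally show "(transpose_mat (first_cols U k) *\<^sub>v (U *\<^sub>v z)) $ l = vec k (\<lambda>l. z $ l) $ l"
    using l by simp
qed (simp add: first_cols_def)

lemma col_mult_diag_mult_transpose:
  fixes U V :: "'a::comm_semiring_1 mat"
  assumes U: "U \<in> carrier_mat m r" and V: "V \<in> carrier_mat n r" and i: "i < n"
  shows "col (U * mat r r (\<lambda>(i,j). if i = j then d i else 0) * transpose_mat V) i
       = U *\<^sub>v vec r (\<lambda>l. d l * V $$ (i,l))"
proof -
  define D :: "'a mat" where "D = mat r r (\<lambda>(i,j). if i = j then d i else 0)"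
  have D: "D \<in> carrier_mat r r"
    unfolding D_def by simp
  have "D *\<^sub>v row V i = vec r (\<lambda>l. d l * V $$ (i,l))"
  proof (rule eq_vecI)
    fix l assume "l < dim_vec (vec r (\<lambda>l. d l * V $$ (i,l)))"
    then have l: "l < r" by simp
    have "(D *\<^sub>v row V i) $ l = (\<Sum>t\<in>{0..<r}. D $$ (l,t) * V $$ (i,t))"
      using l V i by (auto simp: D_def scalar_prod_def)
    also have "\<dots> = (\<Sum>t\<in>{0..<r}. if t = l then d l * V $$ (i,l) else 0)"
      using l by (intro sum.cong) (auto simp: D_def)
    finally show "(D *\<^sub>v row V i) $ l = vec r (\<lambda>l. d l * V $$ (i,l)) $ l"
      using l by simp
  qed (use D in simp)
  moreover have "col (U * D * transpose_mat V) i = U *\<^sub>v (D *\<^sub>v row V i)"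
  proof -
    have "col (U * D * transpose_mat V) i = (U * D) *\<^sub>v row V i"
      using U D V i by (subst col_mult2[of _ m r _ n]) auto
    also have "\<dots> = U *\<^sub>v (D *\<^sub>v row V i)"
      using U D V by (intro assoc_mult_mat_vec[of _ m r _ r]) auto
    finally show ?thesis .
  qed
  ultimately show ?thesis
    unfolding D_def by simp
qed

lemma orthonormal_cols_weighted_row_tail_le:
  fixes V :: "real mat"
  assumes V: "V \<in> carrier_mat n r" and orth: "transpose_mat V * V = 1\<^sub>m r" and i: "i < n"
    and c: "0 \<le> c" and d: "\<And>l. k \<le> l \<Longrightarrow> l < r \<Longrightarrow> \<bar>d l\<bar> \<le> c"
  shows "L2_set (\<lambda>l. d l * V $$ (i,l)) {k..<r} \<le> c"
proof -
  have row_tail: "L2_set (\<lambda>l. \<bar>V $$ (i,l)\<bar>) {k..<r} \<le> 1"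
  proof -
    have "L2_set (\<lambda>l. \<bar>V $$ (i,l)\<bar>) {k..<r} \<le> L2_set (\<lambda>l. V $$ (i,l)) {0..<r}"
      unfolding L2_set_def by (auto intro!: sum_mono2)
    also have "\<dots> = enorm (row V i)"
      unfolding enorm_eq_L2_set using V i by (intro L2_set_cong) auto
    also have "\<dots> \<le> 1"
      by (rule orthonormal_cols_row_enorm_le[OF V orth i])
    finally show ?thesis .
  qed
  have "L2_set (\<lambda>l. d l * V $$ (i,l)) {k..<r} = L2_set (\<lambda>l. \<bar>d l\<bar> * \<bar>V $$ (i,l)\<bar>) {k..<r}"
    by (simp add: L2_set_def abs_mult power_mult_distrib)
  also have "\<dots> \<le> L2_set (\<lambda>l. c * \<bar>V $$ (i,l)\<bar>) {k..<r}"
    by (rule L2_set_mono) (auto intro: mult_right_mono d)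
  also have "\<dots> = c * L2_set (\<lambda>l. \<bar>V $$ (i,l)\<bar>) {k..<r}"
    by (rule L2_set_right_distrib[symmetric, OF c])
  also have "\<dots> \<le> c"
    using mult_left_mono[OF row_tail c] by simp
  finally show ?thesis .
qed

lemma truncation_is_distortion:
  fixes U :: "real mat"
  assumes U: "U \<in> carrier_mat m r" and orth: "transpose_mat U * U = 1\<^sub>m r" and kr: "k \<le> r"
    and Y: "\<And>y. y \<in> Y \<Longrightarrow> y \<in> carrier_vec r"
    and tail: "\<And>y. y \<in> Y \<Longrightarrow> L2_set (\<lambda>l. y $ l) {k..<r} \<le> c"
  shows "is_distortion (\<lambda>v. transpose_mat (first_cols U k) *\<^sub>v v) ((\<lambda>y. U *\<^sub>v y) ` Y) (2 * c)"
  unfolding is_distortion_def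
proof (intro ballI)
  let ?F = "\<lambda>v. transpose_mat (first_cols U k) *\<^sub>v v"
  fix p q assume "p \<in> (\<lambda>y. U *\<^sub>v y) ` Y" "q \<in> (\<lambda>y. U *\<^sub>v y) ` Y"
  then obtain x y where x: "x \<in> Y" "p = U *\<^sub>v x" and y: "y \<in> Y" "q = U *\<^sub>v y"
    by blast
  define z where "z = x - y"
  have xr: "x \<in> carrier_vec r" and yr: "y \<in> carrier_vec r"
    using Y x y by auto
  then have z: "z \<in> carrier_vec r"
    unfolding z_def by simp
  have pq: "p - q = U *\<^sub>v z"
    unfolding x y z_def by (rule mult_minus_distrib_mat_vec[symmetric, OF U xr yr])
  have full: "enorm (p - q) = L2_set (\<lambda>l. z $ l) {0..<r}"
    using z unfolding pq orthonormal_cols_enorm[OF U orth z] by (simp add: enorm_eq_L2_set)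
  have "?F p - ?F q = vec k (\<lambda>l. z $ l)"
    unfolding x y first_cols_transpose_mult_orthonormal[OF U orth xr kr]
      first_cols_transpose_mult_orthonormal[OF U orth yr kr]
    using xr yr kr by (intro eq_vecI) (auto simp: z_def)
  then have truncated: "enorm (?F p - ?F q) = L2_set (\<lambda>l. z $ l) {0..<k}"
    by (simp add: enorm_eq_L2_set cong: L2_set_cong_simp)
  have "{0..<r} = {0..<k} \<union> {k..<r}"
    using kr by auto
  then have "\<bar>enorm (p - q) - enorm (?F p - ?F q)\<bar> \<le> L2_set (\<lambda>l. z $ l) {k..<r}"
    unfolding full truncated by (simp add: abs_L2_set_Un_diff_le)
  also have "\<dots> = L2_set (\<lambda>l. x $ l - y $ l) {k..<r}"
    using xr yr by (intro L2_set_cong) (auto simp: z_def)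
  also have "\<dots> \<le> L2_set (\<lambda>l. x $ l) {k..<r} + L2_set (\<lambda>l. y $ l) {k..<r}"
    by (rule L2_set_diff_le)
  also have "\<dots> \<le> 2 * c"
    using tail[OF x(1)] tail[OF y(1)] by simp
  finally show "\<bar>enorm (p - q) - enorm (?F p - ?F q)\<bar> \<le> 2 * c" .
qed

theorem lemma2:
  fixes A U V :: "real mat" and s :: "nat \<Rightarrow> real" and m n \<rho> k :: nat
  assumes A_dim: "A \<in> carrier_mat m n"
    and rank: "vec_space.rank m A = \<rho>"
    and U_dim: "U \<in> carrier_mat m \<rho>"
    and V_dim: "V \<in> carrier_mat n \<rho>"
    and U_orth: "transpose_mat U * U = 1\<^sub>m \<rho>"
    and V_orth: "transpose_mat V * V = 1\<^sub>m \<rho>"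
    and s_mono: "\<And>i j. 1 \<le> i \<Longrightarrow> i \<le> j \<Longrightarrow> j \<le> \<rho> \<Longrightarrow> s j \<le> s i"
    and s_nonneg: "\<And>i. 1 \<le> i \<Longrightarrow> i \<le> \<rho> \<Longrightarrow> 0 \<le> s i"
    and s_last: "s (\<rho> + 1) = 0"
    and svd: "A = U * mat \<rho> \<rho> (\<lambda>(i,j). if i = j then s (i + 1) else 0) * transpose_mat V"
    and k: "1 \<le> k" "k \<le> \<rho>"
  shows "is_distortion (\<lambda>v. transpose_mat (first_cols U k) *\<^sub>v v) (set (cols A)) (2 * s (k + 1))"
proof -
  define y where "y i = vec \<rho> (\<lambda>l. s (l + 1) * V $$ (i,l))" for i
  have y_dim: "y i \<in> carrier_vec \<rho>" for i
    unfolding y_def by simp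
  have cols: "set (cols A) = (\<lambda>v. U *\<^sub>v v) ` y ` {0..<n}"
    using A_dim col_mult_diag_mult_transpose[OF U_dim V_dim, of _ "\<lambda>i. s (i + 1)"]
    by (force simp: cols_def svd y_def)
  have sk: "0 \<le> s (k + 1)"
    using s_nonneg[of "k + 1"] s_last k by (cases "k = \<rho>") auto
  have tail: "L2_set (\<lambda>l. y i $ l) {k..<\<rho>} \<le> s (k + 1)" if "i < n" for i
  proof -
    have "L2_set (\<lambda>l. y i $ l) {k..<\<rho>} = L2_set (\<lambda>l. s (l + 1) * V $$ (i,l)) {k..<\<rho>}"
      by (intro L2_set_cong) (auto simp: y_def)
    also have "\<dots> \<le> s (k + 1)"
      using s_mono s_nonneg sk
      by (intro orthonormal_cols_weighted_row_tail_le[OF V_dim V_orth that]) auto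
    finally show ?thesis .
  qed
  show ?thesis
    unfolding cols
    by (rule truncation_is_distortion[OF U_dim U_orth k(2)]) (use tail y_dim in force)+
qed

end
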